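(* Assume ${\bf v}$ has the RCI property and $\mathcal{X}_{\bf v}=[0,\infty)^d$. For $f\in C_0(\mathcal{C}_{\bf v})$ define $\tilde f:[0,\infty)^d\to\mathbb{C}$ by $\tilde f(x)=f(\mathcal{L}^\emptyset_{{\bf v},x})$. Then $\tilde f$ is continuous outside a set of Lebesgue measure zero (namely outside $\bigcup_{J\ne\emptyset}\mathtt X^J_{\bf v}$).
   Context: Let $D\ge d\ge1$ and ${\bf v}=\{v_1,\dots,v_d\}$ linearly independent unit vectors in $\mathbb{R}^D$. For $I\subset\{1,\dots,d\}$: ${\bf v}_I=\{v_i\}_{i\in I}$, ${\bf v}_I\setminus i:={\bf v}_{I\setminus\{i\}}$, $\mathcal{L}_{{\bf v}_I}:=\{n\in\mathbb{Z}^D: v_i\cdot n\ge0\ \forall i\in I\}$, $\mathcal{L}_{\bf v}:=\mathcal{L}_{{\bf v}_{\{1,\dots,d\}}}$, $A_{{\bf v}_I}z=(v_i\cdot z)_{i\in I}$, $\mathcal{X}_{{\bf v}_I}:=\overline{A_{{\bf v}_I}(\mathcal{L}_{{\bf v}_I})}$, $\mathcal{X}_{\bf v}$ for $I=\{1,\dots,d\}$. Subsets of $\mathbb{Z}^D$ carry the Fell topology (= product topology on $\{0,1\}^{\mathbb{Z}^D}$). $\Xi_{{\bf v}_I}:=\overline{\{\mathcal{L}_{{\bf v}_I}-n: n\in\mathcal{L}_{{\bf v}_I}\}}$, $\Xi_\emptyset=\{\mathbb{Z}^D\}$, $\Xi_{\bf v}:=\Xi_{{\bf v}_{\{1,\dots,d\}}}$.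 For nonempty $I$, ${\bf v}_I$ is rational (R) if $A_{{\bf v}_I}(\mathcal{L}_{{\bf v}_I})$ is a closed, discrete, finitely generated subsemigroup of $[0,\infty)^I$, completely irrational (CI) if $\mathcal{X}_{{\bf v}_I}=[0,\infty)^I$; RCI: every ${\bf v}_I$ with $\emptyset\ne I\subsetneq\{1,\dots,d\}$ is R or CI. $\mathcal{C}_{\bf v}:=\Xi_{\bf v}\setminus\bigcup_{i}\Xi_{{\bf v}\setminus i}$ (subspace topology). For $J\subset\{1,\dots,d\}$, $x\in\mathbb{R}^d$: $\mathcal{L}^J_{{\bf v},x}:=\{n\in\mathbb{Z}^D: v_k\cdot n+x_k>0\ (k\in J),\ v_k\cdot n+x_k\ge0\ (k\notin J)\}$; for $J\neq\emptyset$, $\mathtt X^J_{\bf v}:=\{x\in\mathcal{X}_{\bf v}:\forall k\in J\ \exists n\in\mathbb{Z}^D,\ x_k=v_k\cdot n\neq0\}$. *)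

theory Defs
  imports "HOL-Analysis.Analysis"
begin

text \<open>Vectors in R^I (I a subset of the index set) are represented in \<open>real ^ 'd\<close>
  with the coordinates outside I equal to 0.\<close>

definition ivec :: "int ^ 'D::finite \<Rightarrow> real ^ 'D" where
  "ivec n = (\<chi> j. real_of_int (n $ j))"

definition Lat :: "('d::finite \<Rightarrow> real ^ 'D::finite) \<Rightarrow> 'd set \<Rightarrow> (int ^ 'D) set" where
  "Lat v I = {n. \<forall>i\<in>I. v i \<bullet> ivec n \<ge> 0}"

definition Amap :: "('d::finite \<Rightarrow> real ^ 'D::finite) \<Rightarrow> 'd set \<Rightarrow> real ^ 'D \<Rightarrow> real ^ 'd" where
  "Amap v I z = (\<chi> i. if i \<in> I then v i \<bullet> z else 0)"

definition Xset :: "('d::finite \<Rightarrow> real ^ 'D::finite) \<Rightarrow> 'd set \<Rightarrow> (real ^ 'd) set" where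
  "Xset v I = closure ((\<lambda>n. Amap v I (ivec n)) ` Lat v I)"

definition orthant :: "('d::finite) set \<Rightarrow> (real ^ 'd) set" where
  "orthant I = {x. (\<forall>i\<in>I. 0 \<le> x $ i) \<and> (\<forall>i. i \<notin> I \<longrightarrow> x $ i = 0)}"

definition fin_gen_semigroup :: "(real ^ 'd::finite) set \<Rightarrow> bool" where
  "fin_gen_semigroup S \<longleftrightarrow> (\<exists>G. finite G \<and> G \<subseteq> S \<and>
      S = {\<Sum>g\<in>G. real (c g) *\<^sub>R g | c. True})"

definition rational_fam :: "('d::finite \<Rightarrow> real ^ 'D::finite) \<Rightarrow> 'd set \<Rightarrow> bool" where
  "rational_fam v I \<longleftrightarrow>
     (let S = (\<lambda>n. Amap v I (ivec n)) ` Lat v I in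
       closed S \<and> discrete S \<and> fin_gen_semigroup S \<and> S \<subseteq> orthant I)"

definition compl_irrational :: "('d::finite \<Rightarrow> real ^ 'D::finite) \<Rightarrow> 'd set \<Rightarrow> bool" where
  "compl_irrational v I \<longleftrightarrow> Xset v I = orthant I"

definition RCI :: "('d::finite \<Rightarrow> real ^ 'D::finite) \<Rightarrow> bool" where
  "RCI v \<longleftrightarrow> (\<forall>I. I \<noteq> {} \<and> I \<noteq> UNIV \<longrightarrow> rational_fam v I \<or> compl_irrational v I)"

text \<open>Fell topology on subsets of Z^D = product topology on {0,1}^(Z^D).\<close>
definition fell :: "('a set) topology" where
  "fell = pullback_topology UNIV (\<lambda>S n. n \<in> S)
            (product_topology (\<lambda>_. discrete_topology (UNIV :: bool set)) UNIV)"

definition Xi :: "('d::finite \<Rightarrow> real ^ 'D::finite) \<Rightarrow> 'd set \<Rightarrow> (int ^ 'D) set set" where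
  "Xi v I = (if I = {} then {UNIV}
             else fell closure_of {(\<lambda>m. m - n) ` Lat v I | n. n \<in> Lat v I})"

definition Cv :: "('d::finite \<Rightarrow> real ^ 'D::finite) \<Rightarrow> (int ^ 'D) set set" where
  "Cv v = Xi v UNIV - (\<Union>i. Xi v (UNIV - {i}))"

definition C0 :: "('a set) set \<Rightarrow> ('a set \<Rightarrow> complex) \<Rightarrow> bool" where
  "C0 C f \<longleftrightarrow> continuous_map (subtopology fell C) euclidean f \<and>
     (\<forall>e>0. \<exists>K. compactin (subtopology fell C) K \<and> (\<forall>S\<in>C - K. norm (f S) < e))"

definition LJ :: "('d::finite \<Rightarrow> real ^ 'D::finite) \<Rightarrow> 'd set \<Rightarrow> real ^ 'd \<Rightarrow> (int ^ 'D) set" where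
  "LJ v J x = {n. \<forall>k. (k \<in> J \<longrightarrow> v k \<bullet> ivec n + x $ k > 0) \<and>
                        (k \<notin> J \<longrightarrow> v k \<bullet> ivec n + x $ k \<ge> 0)}"

definition XJ :: "('d::finite \<Rightarrow> real ^ 'D::finite) \<Rightarrow> 'd set \<Rightarrow> (real ^ 'd) set" where
  "XJ v J = {x \<in> Xset v UNIV. \<forall>k\<in>J. \<exists>n. x $ k = v k \<bullet> ivec n \<and> x $ k \<noteq> 0}"

end

(* The exceptional set lies in the countably many hyperplanes x_k = v_k . n, hence is null.
   Off it, whether a fixed lattice point n satisfies v_k . n + x_k >= 0 for all k is locally
   constant in x within the orthant, and a Fell neighbourhood constrains only finitely many
   points, so x |-> L_{v,x} is continuous into the Fell topology.  It also takes values in C_v: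
   density of A_v(L_v) in the orthant exhibits L_{v,x} as a Fell limit of translates L_v - n,
   while a lattice point that is negative in direction v_i but nonnegative in all others shows
   that L_{v,x} is not stable under translation by L_{v\i}, as every set in Xi_{v\i} is. *)
theory Submission
  imports Defs
begin

lemma topspace_fell [simp]: "topspace fell = UNIV"
  unfolding fell_def by (simp add: topspace_pullback_topology)

lemma continuous_map_fell_mem:
  "continuous_map fell (discrete_topology (UNIV::bool set)) (\<lambda>S. n \<in> S)"
proof -
  have "continuous_map fell (discrete_topology UNIV) ((\<lambda>x. x n) \<circ> (\<lambda>S n. n \<in> S))"
    unfolding fell_def
    by (rule continuous_map_pullback) (rule continuous_map_product_projection, simp)
  then show ?thesis by (simp add: o_def)
qed

lemma openin_fell_mem: "openin fell {S. n \<in> S}"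
  and openin_fell_not_mem: "openin fell {S. n \<notin> S}"
proof -
  have "openin fell {S \<in> topspace fell. (n \<in> S) \<in> A}" for A :: "bool set"
    by (rule openin_continuous_map_preimage[OF continuous_map_fell_mem]) simp
  from this[of "{True}"] this[of "{False}"]
  show "openin fell {S. n \<in> S}" "openin fell {S. n \<notin> S}" by auto
qed

lemma fell_neighbourhood_finite:
  assumes "openin fell U" "P \<in> U"
  obtains F where "finite F" "\<And>Q. \<forall>n\<in>F. n \<in> Q \<longleftrightarrow> n \<in> P \<Longrightarrow> Q \<in> U"
proof -
  obtain V where V: "openin (product_topology (\<lambda>_. discrete_topology (UNIV :: bool set)) UNIV) V"
    and UV: "U = (\<lambda>S n. n \<in> S) -` V \<inter> UNIV"
    using assms(1) unfolding fell_def openin_pullback_topology by blast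
  have "(\<lambda>n. n \<in> P) \<in> V" using assms(2) UV by auto
  then obtain W where W: "finite {i. W i \<noteq> UNIV}" "(\<lambda>n. n \<in> P) \<in> Pi\<^sub>E UNIV W" "Pi\<^sub>E UNIV W \<subseteq> V"
    using V unfolding openin_product_topology_alt by auto
  have "Q \<in> U" if "\<forall>n\<in>{i. W i \<noteq> UNIV}. n \<in> Q \<longleftrightarrow> n \<in> P" for Q
  proof -
    have "(n \<in> Q) \<in> W n" for n
      using W(2) that by (cases "W n = UNIV") (auto simp: PiE_def Pi_def)
    then have "(\<lambda>n. n \<in> Q) \<in> Pi\<^sub>E UNIV W" by (auto simp: PiE_def Pi_def)
    then show ?thesis using W(3) UV by auto
  qed
  with W(1) show thesis by (rule that)
qed

lemma closedin_fell_add_closed: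
  "closedin fell {S::'a::ab_group_add set. \<forall>m\<in>M. \<forall>p\<in>S. p + m \<in> S}"
proof -
  have "UNIV - {S. \<forall>m\<in>M. \<forall>p\<in>S. p + m \<in> S} = (\<Union>(m, p)\<in>M \<times> UNIV. {S. p \<in> S} \<inter> {S. p + m \<notin> S})"
    by auto
  moreover have "openin fell (\<Union>(m, p)\<in>M \<times> UNIV. {S. p \<in> S} \<inter> {S. p + m \<notin> S})"
    by (intro openin_Union) (auto intro: openin_Int openin_fell_mem openin_fell_not_mem)
  ultimately show ?thesis by (simp add: closedin_def)
qed

lemma continuous_within_fell_compose:
  assumes f: "continuous_map (subtopology fell C) euclidean f"
    and g: "\<And>y. y \<in> S \<Longrightarrow> g y \<in> C" and "x \<in> S"
    and stable: "\<And>p. eventually (\<lambda>y. p \<in> g y \<longleftrightarrow> p \<in> g x) (at x within S)"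
  shows "continuous (at x within S) (\<lambda>y. f (g y))"
  unfolding continuous_within tendsto_def
proof (intro allI impI)
  fix T :: "'b set" assume "open T" "f (g x) \<in> T"
  have "openin (subtopology fell C) {Q \<in> C. f Q \<in> T}"
    using openin_continuous_map_preimage[OF f, of T] \<open>open T\<close> by simp
  then obtain U where U: "openin fell U" "{Q \<in> C. f Q \<in> T} = U \<inter> C"
    by (auto simp: openin_subtopology)
  have "g x \<in> U" using U(2) g[OF \<open>x \<in> S\<close>] \<open>f (g x) \<in> T\<close> by blast
  then obtain F where F: "finite F" "\<And>Q. \<forall>n\<in>F. n \<in> Q \<longleftrightarrow> n \<in> g x \<Longrightarrow> Q \<in> U"
    using fell_neighbourhood_finite[OF U(1)] by blast
  have "eventually (\<lambda>y. \<forall>p\<in>F. p \<in> g y \<longleftrightarrow> p \<in> g x) (at x within S)"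
    using F(1) stable by (simp add: eventually_ball_finite)
  moreover have "eventually (\<lambda>y. y \<in> S) (at x within S)"
    by (simp add: eventually_at_filter)
  ultimately show "eventually (\<lambda>y. f (g y) \<in> T) (at x within S)"
    by eventually_elim (use U(2) F(2) g in blast)
qed

lemma ivec_add [simp]: "ivec (a + b) = ivec a + ivec b"
  and ivec_minus [simp]: "ivec (- a) = - ivec a"
  and ivec_zero [simp]: "ivec 0 = 0"
  by (simp_all add: ivec_def vec_eq_iff)

lemma Lat_add: "m \<in> Lat v I \<Longrightarrow> n \<in> Lat v I \<Longrightarrow> m + n \<in> Lat v I"
  by (auto simp: Lat_def inner_add_right)

lemma LJ_empty: "LJ v {} y = {n. \<forall>k. 0 \<le> v k \<bullet> ivec n + y $ k}"
  by (simp add: LJ_def)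

lemma norm_ivec_floor_diff_le:
  fixes w :: "real ^ 'D::finite"
  shows "norm (ivec (\<chi> j. \<lfloor>w $ j\<rfloor>) - w) \<le> real CARD('D)"
proof -
  have "\<bar>real_of_int \<lfloor>w $ j\<rfloor> - w $ j\<bar> \<le> 1" for j
    using of_int_floor_le[of "w $ j"] real_of_int_floor_gt_diff_one[of "w $ j"] by linarith
  then have "\<bar>(ivec (\<chi> j. \<lfloor>w $ j\<rfloor>) - w) $ j\<bar> \<le> 1" for j by (simp add: ivec_def)
  then have "(\<Sum>j\<in>UNIV. \<bar>(ivec (\<chi> j. \<lfloor>w $ j\<rfloor>) - w) $ j\<bar>) \<le> (\<Sum>j\<in>(UNIV::'D set). 1)"
    by (intro sum_mono)
  with norm_le_l1_cart[of "ivec (\<chi> j. \<lfloor>w $ j\<rfloor>) - w"] show ?thesis by simp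
qed

lemma exists_dual_vector:
  fixes v :: "'d \<Rightarrow> 'a::euclidean_space"
  assumes "inj v" "independent (range v)"
  obtains z where "\<And>k. k \<noteq> i \<Longrightarrow> v k \<bullet> z = 0" "v i \<bullet> z = 1"
proof -
  let ?S = "v ` (UNIV - {i})"
  obtain y z where yz: "y \<in> span ?S" "\<And>w. w \<in> span ?S \<Longrightarrow> orthogonal z w" "v i = y + z"
    using orthogonal_subspace_decomp_exists[of ?S "v i"] by blast
  have "range v - {v i} = ?S" using \<open>inj v\<close> by (auto simp: inj_def)
  then have "v i \<notin> span ?S"
    using \<open>independent (range v)\<close> unfolding dependent_def by (metis rangeI)
  then have "z \<noteq> 0" using yz by auto
  have others: "v k \<bullet> z = 0" if "k \<noteq> i" for k
    using yz(2)[of "v k"] that by (simp add: span_base orthogonal_def inner_commute)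
  have "y \<bullet> z = 0" using yz(2)[OF yz(1)] by (simp add: orthogonal_def inner_commute)
  then have "v i \<bullet> z = z \<bullet> z" using yz(3) by (simp add: inner_add_left)
  with \<open>z \<noteq> 0\<close> have "v i \<bullet> (z /\<^sub>R (z \<bullet> z)) = 1" by simp
  moreover have "v k \<bullet> (z /\<^sub>R (z \<bullet> z)) = 0" if "k \<noteq> i" for k using others[OF that] by simp
  ultimately show thesis using that by blast
qed

lemma Lat_point_in_box:
  assumes full: "Xset v UNIV = {x. \<forall>i. 0 \<le> x $ i}"
    and a: "\<forall>k. 0 \<le> a $ k" and "e > 0"
  obtains n where "n \<in> Lat v UNIV" "\<And>k. a $ k < v k \<bullet> ivec n" "\<And>k. v k \<bullet> ivec n < a $ k + e"
proof -
  define b where "b = (\<chi> k. a $ k + e / 2)"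
  have "b \<in> Xset v UNIV" using full a \<open>e > 0\<close> by (simp add: b_def)
  then obtain n where n: "n \<in> Lat v UNIV" "dist (Amap v UNIV (ivec n)) b < e / 2"
    unfolding Xset_def closure_approachable using \<open>e > 0\<close> by (metis (no_types, lifting) half_gt_zero imageE)
  have "\<bar>v k \<bullet> ivec n - (a $ k + e / 2)\<bar> < e / 2" for k
    using n(2) component_le_norm_cart[of "Amap v UNIV (ivec n) - b" k]
    by (simp add: dist_norm Amap_def b_def)
  then have "a $ k < v k \<bullet> ivec n \<and> v k \<bullet> ivec n < a $ k + e" for k
    unfolding abs_less_iff by (smt (verit, best) field_sum_of_halves)
  with n(1) show thesis by (intro that) auto
qed

text \<open>Rounding a large negative multiple of the dual vector of \<open>v i\<close> to the lattice
  changes all \<open>v k\<close>-coordinates by at most \<open>B = CARD('D)\<close>; a lattice point of the cone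
  whose coordinates all lie in \<open>(B, B + 1)\<close> repairs the coordinates \<open>k \<noteq> i\<close>.\<close>
lemma exists_Lat_point_negative_at:
  fixes v :: "'d::finite \<Rightarrow> real ^ 'D::finite"
  assumes "inj v" "independent (range v)"
    and unit: "\<forall>k. norm (v k) = 1"
    and full: "Xset v UNIV = {x. \<forall>i. 0 \<le> x $ i}"
  obtains m where "m \<in> Lat v (UNIV - {i})" "v i \<bullet> ivec m < c"
proof -
  define B where "B = real CARD('D)"
  obtain z where z: "\<And>k. k \<noteq> i \<Longrightarrow> v k \<bullet> z = 0" "v i \<bullet> z = 1"
    using exists_dual_vector[OF assms(1,2)] by blast
  define w where "w = (c - 2 * B - 1) *\<^sub>R z"
  define m2 :: "int ^ 'D" where "m2 = (\<chi> j. \<lfloor>w $ j\<rfloor>)"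
  have round: "\<bar>v k \<bullet> ivec m2 - v k \<bullet> w\<bar> \<le> B" for k
  proof -
    have "\<bar>v k \<bullet> (ivec m2 - w)\<bar> \<le> norm (v k) * norm (ivec m2 - w)"
      by (rule Cauchy_Schwarz_ineq2)
    also have "\<dots> \<le> B" using unit norm_ivec_floor_diff_le[of w] by (simp add: m2_def B_def)
    finally show ?thesis by (simp add: inner_diff_right)
  qed
  obtain m1 where m1: "m1 \<in> Lat v UNIV" "\<And>k. B < v k \<bullet> ivec m1" "\<And>k. v k \<bullet> ivec m1 < B + 1"
    using Lat_point_in_box[OF full, of "\<chi> k. B" 1] by (auto simp: B_def)
  have "0 \<le> v k \<bullet> ivec (m1 + m2)" if "k \<noteq> i" for k
    using round[of k] m1(2)[of k] z(1)[OF that] by (simp add: w_def inner_add_right abs_le_iff)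
  then have "m1 + m2 \<in> Lat v (UNIV - {i})" by (simp add: Lat_def)
  moreover have "v i \<bullet> ivec (m1 + m2) < c"
    using round[of i] m1(3)[of i] z(2) by (simp add: w_def inner_add_right abs_le_iff)
  ultimately show thesis by (rule that)
qed

lemma Xi_add_closed:
  assumes "S \<in> Xi v I" "m \<in> Lat v I" "p \<in> S"
  shows "p + m \<in> S"
proof (cases "I = {}")
  case False
  have "{(\<lambda>q. q - n) ` Lat v I | n. n \<in> Lat v I} \<subseteq> {S. \<forall>m\<in>Lat v I. \<forall>p\<in>S. p + m \<in> S}"
  proof clarify
    fix n m q assume "m \<in> Lat v I" "q \<in> Lat v I"
    then have "q + m \<in> Lat v I" by (rule Lat_add[rotated])
    then show "q - n + m \<in> (\<lambda>q. q - n) ` Lat v I"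
      by (intro image_eqI[of _ _ "q + m"]) (auto simp: algebra_simps)
  qed
  then have "Xi v I \<subseteq> {S. \<forall>m\<in>Lat v I. \<forall>p\<in>S. p + m \<in> S}"
    unfolding Xi_def using False by (simp add: closure_of_minimal closedin_fell_add_closed)
  then show ?thesis using assms by blast
qed (use assms in \<open>simp add: Xi_def\<close>)

text \<open>The translate \<open>n0\<close> overshoots \<open>y\<close> in every coordinate, but by less than the
  smallest violation \<open>-(v\<^sub>k \<bullet> p + y\<^sub>k) > 0\<close> occurring for \<open>p \<in> F\<close>.\<close>
lemma Lat_translate_agrees_on_finite:
  assumes full: "Xset v UNIV = {x. \<forall>i. 0 \<le> x $ i}"
    and y: "\<forall>i. 0 \<le> y $ i" and "finite F"
  obtains n0 where "n0 \<in> Lat v UNIV" "\<And>p. p \<in> F \<Longrightarrow> p + n0 \<in> Lat v UNIV \<longleftrightarrow> p \<in> LJ v {} y"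
proof -
  define gap where "gap = (\<lambda>(p, k). - (v k \<bullet> ivec p + y $ k))"
  define bad where "bad = {(p, k). p \<in> F \<and> 0 < gap (p, k)}"
  have "finite bad"
    unfolding bad_def by (rule finite_subset[of _ "F \<times> UNIV"]) (auto simp: \<open>finite F\<close>)
  define e where "e = Min (insert 1 (gap ` bad))"
  have "e > 0" unfolding e_def using \<open>finite bad\<close> by (auto simp: bad_def)
  have e_le: "e \<le> gap (p, k)" if "(p, k) \<in> bad" for p k
    unfolding e_def using \<open>finite bad\<close> that by (intro Min_le) auto
  obtain n0 where n0: "n0 \<in> Lat v UNIV" "\<And>k. y $ k < v k \<bullet> ivec n0" "\<And>k. v k \<bullet> ivec n0 < y $ k + e"
    using Lat_point_in_box[OF full y \<open>e > 0\<close>] by blast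
  have "p + n0 \<in> Lat v UNIV \<longleftrightarrow> p \<in> LJ v {} y" if "p \<in> F" for p
  proof
    assume "p \<in> LJ v {} y"
    then have "0 \<le> v k \<bullet> ivec p + y $ k" for k by (simp add: LJ_empty)
    then have "0 \<le> v k \<bullet> ivec p + v k \<bullet> ivec n0" for k
      using n0(2)[of k] by (smt (verit))
    then show "p + n0 \<in> Lat v UNIV" by (simp add: Lat_def inner_add_right)
  next
    assume "p + n0 \<in> Lat v UNIV"
    then have "0 \<le> v k \<bullet> ivec p + v k \<bullet> ivec n0" for k by (simp add: Lat_def inner_add_right)
    have "gap (p, k) < e" for k
      using n0(3)[of k] \<open>0 \<le> v k \<bullet> ivec p + v k \<bullet> ivec n0\<close> by (simp add: gap_def)
    then have "(p, k) \<notin> bad" for k using e_le[of p k] by (meson not_le)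
    then have no_gap: "\<not> 0 < gap (p, k)" for k using \<open>p \<in> F\<close> by (simp add: bad_def)
    have "0 \<le> v k \<bullet> ivec p + y $ k" for k
      using no_gap[of k] unfolding gap_def prod.case by linarith
    then show "p \<in> LJ v {} y" by (simp add: LJ_empty)
  qed
  with n0(1) show thesis by (rule that)
qed

lemma LJ_empty_in_Xi:
  assumes full: "Xset v UNIV = {x. \<forall>i. 0 \<le> x $ i}"
    and y: "\<forall>i. 0 \<le> y $ i"
  shows "LJ v {} y \<in> Xi v UNIV"
proof -
  let ?G = "{(\<lambda>q. q - n) ` Lat v UNIV | n. n \<in> Lat v UNIV}"
  have "\<exists>Q. Q \<in> ?G \<and> Q \<in> T" if T: "openin fell T" "LJ v {} y \<in> T" for T
  proof -
    obtain F where F: "finite F" "\<And>Q. \<forall>p\<in>F. p \<in> Q \<longleftrightarrow> p \<in> LJ v {} y \<Longrightarrow> Q \<in> T"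
      using fell_neighbourhood_finite[OF T] by blast
    obtain n0 where n0: "n0 \<in> Lat v UNIV" "\<And>p. p \<in> F \<Longrightarrow> p + n0 \<in> Lat v UNIV \<longleftrightarrow> p \<in> LJ v {} y"
      using Lat_translate_agrees_on_finite[OF full y F(1)] by blast
    have "p \<in> (\<lambda>q. q - n0) ` Lat v UNIV \<longleftrightarrow> p + n0 \<in> Lat v UNIV" for p
      by (auto intro: image_eqI[of _ _ "p + n0"])
    then have "(\<lambda>q. q - n0) ` Lat v UNIV \<in> T" by (intro F(2)) (simp add: n0(2))
    moreover have "(\<lambda>q. q - n0) ` Lat v UNIV \<in> ?G" using n0(1) by blast
    ultimately show ?thesis by blast
  qed
  then show ?thesis by (simp add: Xi_def in_closure_of)
qed

lemma LJ_empty_notin_Xi_facet: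
  fixes v :: "'d::finite \<Rightarrow> real ^ 'D::finite"
  assumes "inj v" "independent (range v)" "\<forall>k. norm (v k) = 1"
    and full: "Xset v UNIV = {x. \<forall>i. 0 \<le> x $ i}"
    and y: "\<forall>i. 0 \<le> y $ i"
  shows "LJ v {} y \<notin> Xi v (UNIV - {i})"
proof
  assume "LJ v {} y \<in> Xi v (UNIV - {i})"
  obtain m where "m \<in> Lat v (UNIV - {i})" "v i \<bullet> ivec m < - y $ i"
    using exists_Lat_point_negative_at[OF assms(1-4)] by blast
  moreover have "0 \<in> LJ v {} y" using y by (simp add: LJ_empty)
  ultimately have "0 + m \<in> LJ v {} y" using Xi_add_closed \<open>LJ v {} y \<in> Xi v (UNIV - {i})\<close> by blast
  with \<open>v i \<bullet> ivec m < - y $ i\<close> show False by (auto simp: LJ_empty dest: spec[of _ i])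
qed

lemma LJ_empty_in_Cv:
  fixes v :: "'d::finite \<Rightarrow> real ^ 'D::finite"
  assumes "inj v" "independent (range v)" "\<forall>k. norm (v k) = 1"
    and "Xset v UNIV = {x. \<forall>i. 0 \<le> x $ i}"
    and "\<forall>i. 0 \<le> y $ i"
  shows "LJ v {} y \<in> Cv v"
  using LJ_empty_in_Xi[OF assms(4,5)] LJ_empty_notin_Xi_facet[OF assms] by (auto simp: Cv_def)

lemma eventually_sign_component_stable:
  fixes x :: "real ^ 'd::finite"
  assumes "c + x $ k = 0 \<Longrightarrow> x $ k = 0"
  shows "eventually (\<lambda>y. 0 \<le> c + y $ k \<longleftrightarrow> 0 \<le> c + x $ k) (at x within {y. \<forall>i. 0 \<le> y $ i})"
proof -
  have lim: "((\<lambda>y. c + y $ k) \<longlongrightarrow> c + x $ k) (at x within {y. \<forall>i. 0 \<le> y $ i})"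
    by (intro tendsto_intros)
  consider "c + x $ k > 0" | "c + x $ k < 0" | "c + x $ k = 0" by linarith
  then show ?thesis
  proof cases
    case 1
    with order_tendstoD(1)[OF lim 1] show ?thesis by (auto elim: eventually_mono)
  next
    case 2
    with order_tendstoD(2)[OF lim 2] show ?thesis by (auto elim: eventually_mono)
  next
    case 3
    with assms have "c = 0" by simp
    moreover have "eventually (\<lambda>y. y \<in> {y. \<forall>i. 0 \<le> y $ i}) (at x within {y. \<forall>i. 0 \<le> y $ i})"
      by (simp add: eventually_at_filter)
    ultimately show ?thesis using 3 by (auto elim: eventually_mono)
  qed
qed

lemma eventually_mem_LJ_empty_stable:
  assumes "\<And>k n. x $ k = v k \<bullet> ivec n \<Longrightarrow> x $ k = 0"
  shows "eventually (\<lambda>y. p \<in> LJ v {} y \<longleftrightarrow> p \<in> LJ v {} x) (at x within {y. \<forall>i. 0 \<le> y $ i})"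
proof -
  have "eventually (\<lambda>y. \<forall>k\<in>UNIV. 0 \<le> v k \<bullet> ivec p + y $ k \<longleftrightarrow> 0 \<le> v k \<bullet> ivec p + x $ k)
          (at x within {y. \<forall>i. 0 \<le> y $ i})"
  proof (intro eventually_ball_finite ballI eventually_sign_component_stable)
    show "x $ k = 0" if "v k \<bullet> ivec p + x $ k = 0" for k
      using that assms[of k "- p"] by (simp add: add_eq_0_iff)
  qed simp
  then show ?thesis by eventually_elim (simp add: LJ_empty)
qed

lemma null_sets_lborel_coordinate_in_countable:
  fixes W :: "'d::finite \<Rightarrow> real set"
  assumes "\<And>k. countable (W k)"
  shows "{x::real ^ 'd. \<exists>k. x $ k \<in> W k} \<in> null_sets lborel"
proof -
  have [measurable]: "W k \<in> sets borel" for k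
    by (rule sets.countable) (auto simp: assms)
  have borel: "{x::real ^ 'd. \<exists>k. x $ k \<in> W k} \<in> sets borel" by measurable
  have "negligible (\<Union>(k, w)\<in>Sigma UNIV W. {x::real ^ 'd. axis k 1 \<bullet> x = w})"
    using assms by (intro negligible_countable_Union countable_SIGMA countable_image)
      (auto intro!: negligible_hyperplane simp: axis_eq_0_iff)
  moreover have "{x::real ^ 'd. \<exists>k. x $ k \<in> W k} \<subseteq> (\<Union>(k, w)\<in>Sigma UNIV W. {x. axis k 1 \<bullet> x = w})"
    by (auto simp: cart_eq_inner_axis inner_commute)
  ultimately have "negligible {x::real ^ 'd. \<exists>k. x $ k \<in> W k}"
    by (rule negligible_subset)
  with borel show ?thesis
    by (simp add: negligible_iff_null_sets null_sets_completion_iff)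
qed

lemma Union_XJ_eq:
  assumes full: "Xset v UNIV = {x. \<forall>i. 0 \<le> x $ i}"
  shows "(\<Union>J\<in>{J. J \<noteq> {}}. XJ v J) =
    {x. \<forall>i. 0 \<le> x $ i} \<inter> {x. \<exists>k. x $ k \<in> range (\<lambda>n. v k \<bullet> ivec n) - {0}}"
proof
  show "(\<Union>J\<in>{J. J \<noteq> {}}. XJ v J) \<subseteq> {x. \<forall>i. 0 \<le> x $ i} \<inter> {x. \<exists>k. x $ k \<in> range (\<lambda>n. v k \<bullet> ivec n) - {0}}"
    by (fastforce simp: XJ_def full)
next
  have "XJ v {k} = {x. \<forall>i. 0 \<le> x $ i} \<inter> {x. x $ k \<in> range (\<lambda>n. v k \<bullet> ivec n) - {0}}" for k
    by (auto simp: XJ_def full)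
  then show "{x. \<forall>i. 0 \<le> x $ i} \<inter> {x. \<exists>k. x $ k \<in> range (\<lambda>n. v k \<bullet> ivec n) - {0}} \<subseteq> (\<Union>J\<in>{J. J \<noteq> {}}. XJ v J)"
    by blast
qed

theorem mainTheorem13:
  fixes v :: "'d::finite \<Rightarrow> real ^ 'D::finite"
    and f :: "(int ^ 'D) set \<Rightarrow> complex"
  assumes indep: "inj v" "independent (range v)"
    and unit: "\<forall>k. norm (v k) = 1"
    and rci: "RCI v"
    and full: "Xset v UNIV = {x. \<forall>i. 0 \<le> x $ i}"
    and f: "C0 (Cv v) f"
  shows "(\<Union>J\<in>{J. J \<noteq> {}}. XJ v J) \<in> null_sets lborel \<and>
         (\<forall>x. (\<forall>i. 0 \<le> x $ i) \<and> x \<notin> (\<Union>J\<in>{J. J \<noteq> {}}. XJ v J) \<longrightarrow>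
              continuous (at x within {y. \<forall>i. 0 \<le> y $ i}) (\<lambda>y. f (LJ v {} y)))"
proof (intro conjI allI impI)
  have "{x. \<exists>k. x $ k \<in> range (\<lambda>n. v k \<bullet> ivec n) - {0}} \<in> null_sets lborel"
    by (intro null_sets_lborel_coordinate_in_countable) simp
  moreover have "{x::real ^ 'd. \<forall>i. 0 \<le> x $ i} \<in> sets lborel" by measurable
  ultimately show "(\<Union>J\<in>{J. J \<noteq> {}}. XJ v J) \<in> null_sets lborel"
    unfolding Union_XJ_eq[OF full] by (rule null_set_Int1)
next
  fix x :: "real ^ 'd"
  assume x: "(\<forall>i. 0 \<le> x $ i) \<and> x \<notin> (\<Union>J\<in>{J. J \<noteq> {}}. XJ v J)"
  then have avoids: "x $ k = 0" if "x $ k = v k \<bullet> ivec n" for k n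
    using that by (fastforce simp: Union_XJ_eq[OF full])
  show "continuous (at x within {y. \<forall>i. 0 \<le> y $ i}) (\<lambda>y. f (LJ v {} y))"
  proof (rule continuous_within_fell_compose)
    show "continuous_map (subtopology fell (Cv v)) euclidean f" using f by (simp add: C0_def)
    show "LJ v {} y \<in> Cv v" if "y \<in> {y. \<forall>i. 0 \<le> y $ i}" for y
      using LJ_empty_in_Cv[OF indep unit full] that by simp
    show "eventually (\<lambda>y. p \<in> LJ v {} y \<longleftrightarrow> p \<in> LJ v {} x) (at x within {y. \<forall>i. 0 \<le> y $ i})" for p
      using avoids by (rule eventually_mem_LJ_empty_stable)
  qed (use x in simp)
qed

end
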